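(* Let $n\ge 3$ and consider the cycle graph on nodes $1,\dots,n$ with arbitrary measurements $\widetilde{R}_{12},\dots,\widetilde{R}_{n-1,n},\widetilde{R}_{n1}\in\mathrm{SO}(3)$. For each $k\in\{0,\dots,n-1\}$, the point $R=(R_1,\dots,R_n)$ with $R_1=I_3$ and $$R_i=\Big(\prod_{s=1}^{i-1}\widetilde{R}_{s,s+1}\Big)^{\top}E_k^{\,i-1},\qquad i\in\{2,\dots,n\},$$ is a stationary point of $f$ on $\mathrm{SO}(3)^n$, and at this point $f(R)=-3n-2n\operatorname{Tr}(E_k)=-3n-2n\big(1+2\cos(\gamma/n-2k\pi/n)\big)$.
   Context: Cycle-graph rotation averaging setup. Let $n\ge 3$. The cycle graph has nodes $1,\dots,n$ and edges $\{i,i+1\}$ for $i=1,\dots,n-1$ together with $\{n,1\}$; write $i\sim j$ if $\{i,j\}$ is an edge. Each edge carries a measured rotation $\widetilde{R}_{ij}\in\mathrm{SO}(3)$, with the convention $\widetilde{R}_{ji}=\widetilde{R}_{ij}^\top$. Define the symmetric $3n\times 3n$ block matrix $\widetilde{R}$ whose $(i,j)$ $3\times3$ block is $I_3$ if $i=j$, $\widetilde{R}_{ij}$ if $i\sim j$, and $0$ otherwise. For $R=(R_1,\dots,R_n)\in\mathrm{SO}(3)^n$, write $R=[R_1^\top\ \cdots\ R_n^\top]^\top\in\mathbb{R}^{3n\times 3}$ and define $f(R):=-\operatorname{Tr}(R^\top\widetilde{R}R)$; the rotation averaging problem is to minimize $f$ over $\mathrm{SO}(3)^n$. The cycle error is $E:=\widetilde{R}_{12}\widetilde{R}_{23}\cdots\widetilde{R}_{n-1,n}\widetilde{R}_{n1}\in\mathrm{SO}(3)$.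 Write $E=\exp(\gamma[\hat n]_\times)$ with unit axis $\hat n$ and angle $\gamma=\angle(E)\in[-\pi,\pi]$. For $k\in\{0,\dots,n-1\}$, $E_k:=\exp\big((\gamma/n-2k\pi/n)[\hat n]_\times\big)$. *)

theory Defs
  imports "HOL-Analysis.Analysis"
begin

type_synonym mat3 = "real^3^3"

definition SO3 :: "mat3 set" where
  "SO3 = {R. transpose R ** R = mat 1 \<and> det R = 1}"

primrec mpow :: "mat3 \<Rightarrow> nat \<Rightarrow> mat3" where
  "mpow A 0 = mat 1"
| "mpow A (Suc k) = mpow A k ** A"

definition mexp :: "mat3 \<Rightarrow> mat3" where
  "mexp A = (\<Sum>k. (1 / fact k) *\<^sub>R mpow A k)"

definition hat :: "real^3 \<Rightarrow> mat3" where
  "hat v = vector [vector [0, - v$3, v$2],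
                   vector [v$3, 0, - v$1],
                   vector [- v$2, v$1, 0]]"

definition skew :: "mat3 \<Rightarrow> bool" where
  "skew A \<longleftrightarrow> transpose A = - A"

text \<open>Measurements on the cycle: M s = R~_{s,s+1} for 1 <= s <= n-1, and M n = R~_{n,1}.\<close>

definition lprod :: "(nat \<Rightarrow> mat3) \<Rightarrow> nat \<Rightarrow> mat3" where
  "lprod M i = foldl (\<lambda>A s. A ** M s) (mat 1) [1..<i]"

definition Rblock :: "nat \<Rightarrow> (nat \<Rightarrow> mat3) \<Rightarrow> nat \<Rightarrow> nat \<Rightarrow> mat3" where
  "Rblock n M i j =
     (if i = j then mat 1
      else if j = i + 1 then M i
      else if i = j + 1 then transpose (M j)
      else if i = n \<and> j = 1 then M n
      else if i = 1 \<and> j = n then transpose (M n)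
      else 0)"

text \<open>Objective f(R) = - Tr(R^T R~ R) = - sum_{i,j} Tr(R_i^T R~_{ij} R_j).\<close>
definition fcost :: "nat \<Rightarrow> (nat \<Rightarrow> mat3) \<Rightarrow> (nat \<Rightarrow> mat3) \<Rightarrow> real" where
  "fcost n M R = - (\<Sum>i\<in>{1..n}. \<Sum>j\<in>{1..n}. trace (transpose (R i) ** Rblock n M i j ** R j))"

text \<open>Cycle error E = R~_12 R~_23 ... R~_{n-1,n} R~_{n1}.\<close>
definition cycle_error :: "nat \<Rightarrow> (nat \<Rightarrow> mat3) \<Rightarrow> mat3" where
  "cycle_error n M = lprod M (n + 1)"

text \<open>Stationary point of f on SO(3)^n: R in SO(3)^n and the differential of the
  (ambient, smooth) function f vanishes on every tangent vector
  (R_1 Omega_1, ..., R_n Omega_n), Omega_i skew-symmetric.\<close>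
definition stationary :: "nat \<Rightarrow> (nat \<Rightarrow> mat3) \<Rightarrow> (nat \<Rightarrow> mat3) \<Rightarrow> bool" where
  "stationary n M R \<longleftrightarrow>
     (\<forall>i\<in>{1..n}. R i \<in> SO3) \<and>
     (\<forall>\<Omega>. (\<forall>i\<in>{1..n}. skew (\<Omega> i)) \<longrightarrow>
        ((\<lambda>t. fcost n M (\<lambda>i. R i + t *\<^sub>R (R i ** \<Omega> i))) has_real_derivative 0) (at 0))"

end

theory Submission
  imports Defs
begin

text \<open>Write \<open>K\<close> for the hat matrix of the unit axis. Since \<open>K\<^sup>3 = -K\<close>, the exponential series
  collapses to Rodrigues' formula \<open>exp (t K) = I + sin t K + (1 - cos t) K\<^sup>2\<close>. Hence \<open>E\<^sub>k = exp (\<theta> K)\<close>,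
  \<open>\<theta> = \<gamma>/n - 2k\<pi>/n\<close>, is a rotation with trace \<open>1 + 2 cos \<theta>\<close> and \<open>E\<^sub>k\<^sup>n = exp ((\<gamma> - 2k\<pi>) K) = E\<close>.
  For the proposed point this makes every relative rotation \<open>R\<^sub>i\<^sup>T R~\<^sub>i\<^sub>,\<^sub>i\<^sub>+\<^sub>1 R\<^sub>i\<^sub>+\<^sub>1\<close> along the cycle
  equal to \<open>E\<^sub>k\<close>. Then block row \<open>i\<close> of \<open>R~ R\<close>, seen from \<open>R\<^sub>i\<close>, is \<open>I + E\<^sub>k + E\<^sub>k\<^sup>T\<close>: its trace gives
  \<open>f(R) = -n(3 + 2 tr E\<^sub>k)\<close>, and the first variation of the quadratic \<open>f\<close> in a direction
  \<open>(R\<^sub>i \<Omega>\<^sub>i)\<^sub>i\<close> is a sum of terms \<open>tr (\<Omega>\<^sub>i\<^sup>T (I + E\<^sub>k + E\<^sub>k\<^sup>T))\<close>, which vanish because \<open>\<Omega>\<^sub>i\<close> is skew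
  and \<open>I + E\<^sub>k + E\<^sub>k\<^sup>T\<close> symmetric.\<close>

lemma matrix_add_rdistrib: "((A::'a::semiring_1^'n^'m) + B) ** C = A ** C + B ** C"
  by (vector matrix_matrix_mult_def sum.distrib[symmetric] field_simps)

lemma matrix_mul_uminus_left: "(- (A::'a::ring_1^'n^'m)) ** B = - (A ** B)"
  by (simp add: matrix_matrix_mult_def vec_eq_iff sum_negf)

lemma matrix_mul_uminus_right: "(A::'a::ring_1^'n^'m) ** (- B) = - (A ** B)"
  by (simp add: matrix_matrix_mult_def vec_eq_iff sum_negf)

lemma matrix_mul_scaleR_left: "(c *\<^sub>R (A::real^'n^'m)) ** B = c *\<^sub>R (A ** B)"
  by (simp add: matrix_matrix_mult_def vec_eq_iff sum_distrib_left mult_ac)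

lemma matrix_mul_scaleR_right: "(A::real^'n^'m) ** (c *\<^sub>R B) = c *\<^sub>R (A ** B)"
  by (simp add: matrix_matrix_mult_def vec_eq_iff sum_distrib_left mult_ac)

lemma transpose_add: "transpose ((A::'a::semiring_1^'n^'m) + B) = transpose A + transpose B"
  by (simp add: transpose_def vec_eq_iff)

lemma transpose_zero: "transpose (0::'a::zero^'n^'m) = 0"
  by (simp add: transpose_def vec_eq_iff)

lemma trace_transpose: "trace (transpose (A::'a::semiring_1^'n^'n)) = trace A"
  by (simp add: trace_def transpose_def)

lemma trace_scaleR: "trace (c *\<^sub>R (A::real^'n^'n)) = c * trace A"
  by (simp add: trace_def sum_distrib_left)

lemma trace_uminus: "trace (- (A::'a::ring_1^'n^'n)) = - trace A"
  by (simp add: trace_def sum_negf)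

lemma trace_zero: "trace (0::'a::semiring_1^'n^'n) = 0"
  by (simp add: trace_def)

lemma trace_skew_mult_symmetric:
  fixes W A :: "real^'n^'n"
  assumes "transpose W = - W" and "transpose A = A"
  shows "trace (transpose W ** A) = 0"
proof -
  have "trace (transpose W ** A) = trace (transpose (transpose W ** A))"
    by (rule trace_transpose[symmetric])
  also have "\<dots> = trace (A ** W)"
    using assms(2) by (simp add: matrix_transpose_mul)
  also have "\<dots> = trace (W ** A)"
    by (rule trace_mul_sym)
  also have "\<dots> = - trace (transpose W ** A)"
    using assms(1) by (simp add: matrix_mul_uminus_left trace_uminus)
  finally show ?thesis
    by simp
qed

section \<open>Rodrigues' formula\<close>

definition kpoly :: "real^'n^'n \<Rightarrow> real \<Rightarrow> real \<Rightarrow> real \<Rightarrow> real^'n^'n" where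
  "kpoly K a b c = a *\<^sub>R mat 1 + b *\<^sub>R K + c *\<^sub>R (K ** K)"

lemma kpoly_mult:
  assumes K3: "K ** K ** K = - K"
  shows "kpoly K a b c ** kpoly K a' b' c' =
    kpoly K (a * a') (a * b' + b * a' - b * c' - c * b') (a * c' + c * a' + b * b' - c * c')"
proof -
  have K3': "K ** (K ** K) = - K"
    using K3 by (simp add: matrix_mul_assoc)
  have K4: "(K ** K) ** (K ** K) = - (K ** K)"
    using K3 by (metis matrix_mul_assoc matrix_mul_uminus_left)
  show ?thesis
    unfolding kpoly_def
    by (simp only: matrix_add_ldistrib matrix_add_rdistrib matrix_mul_scaleR_left
        matrix_mul_scaleR_right K3 K3' K4 matrix_mul_uminus_left matrix_mul_uminus_right
        matrix_mul_lid matrix_mul_rid)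
      (simp add: vec_eq_iff algebra_simps)
qed

lemma transpose_kpoly:
  assumes "transpose K = - K"
  shows "transpose (kpoly K a b c) = kpoly K a (- b) c"
  using assms unfolding kpoly_def
  by (simp add: transpose_add transpose_scalar matrix_transpose_mul
      matrix_mul_uminus_left matrix_mul_uminus_right)

lemma trace_kpoly:
  fixes K :: "real^'n^'n"
  assumes "trace K = 0" and "trace (K ** K) = -2"
  shows "trace (kpoly K a b c) = real CARD('n) * a - 2 * c"
  using assms unfolding kpoly_def by (simp add: trace_add trace_scaleR trace_I)

lemma mpow_scaleR: "mpow (t *\<^sub>R K) m = t ^ m *\<^sub>R mpow K m"
  by (induction m) (simp_all add: matrix_mul_scaleR_left matrix_mul_scaleR_right mult.commute)

text \<open>The coordinates of \<open>K\<^sup>m\<close> are the Taylor coefficients of \<open>sin\<close> and \<open>1 - cos\<close>, scaled by \<open>m!\<close>.\<close>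

lemma mpow_kpoly:
  assumes K3: "K ** K ** K = - K"
  shows "mpow K m = kpoly K (if m = 0 then 1 else 0) (fact m * sin_coeff m)
                     (if m = 0 then 0 else - (fact m * cos_coeff m))"
proof (induction m)
  case 0
  then show ?case
    by (simp add: kpoly_def sin_coeff_def)
next
  case (Suc m)
  have "mpow K (Suc m) = mpow K m ** kpoly K 0 1 0"
    by (simp add: kpoly_def)
  also have "\<dots> = kpoly K 0 ((if m = 0 then 1 else 0) + (if m = 0 then 0 else fact m * cos_coeff m))
                         (fact m * sin_coeff m)"
    unfolding Suc kpoly_mult[OF K3] by simp
  also have "\<dots> = kpoly K 0 (fact (Suc m) * sin_coeff (Suc m)) (- (fact (Suc m) * cos_coeff (Suc m)))"
  proof -
    have "(if m = 0 then 1 else 0) + (if m = 0 then 0 else fact m * cos_coeff m)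
        = fact (Suc m) * sin_coeff (Suc m)"
      by (simp add: sin_coeff_Suc cos_coeff_def)
    moreover have "fact m * sin_coeff m = - (fact (Suc m) * cos_coeff (Suc m))"
      by (simp add: cos_coeff_Suc)
    ultimately show ?thesis
      by simp
  qed
  finally show ?case
    by simp
qed

definition rodrigues :: "real^'n^'n \<Rightarrow> real \<Rightarrow> real^'n^'n" where
  "rodrigues K t = kpoly K 1 (sin t) (1 - cos t)"

lemma mexp_scaleR_eq_rodrigues:
  assumes K3: "K ** K ** K = - K"
  shows "mexp (t *\<^sub>R K) = rodrigues K t"
proof -
  have series_term: "(1 / fact m) *\<^sub>R mpow (t *\<^sub>R K) m =
     (if m = 0 then 1 else 0) *\<^sub>R mat 1 + (sin_coeff m * t ^ m) *\<^sub>R K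
     + ((if m = 0 then 1 else 0) - cos_coeff m * t ^ m) *\<^sub>R (K ** K)" for m
    unfolding mpow_scaleR mpow_kpoly[OF K3] kpoly_def
    by (simp add: algebra_simps cos_coeff_def)
  have one: "(\<lambda>m. (if m = 0 then 1 else 0::real)) sums 1"
    using sums_single[of 0 "\<lambda>_. 1::real"] by simp
  have "(\<lambda>m. (1 / fact m) *\<^sub>R mpow (t *\<^sub>R K) m) sums
      (1 *\<^sub>R mat 1 + sin t *\<^sub>R K + (1 - cos t) *\<^sub>R (K ** K))"
    unfolding series_term
    using one sin_converges[of t] sums_diff[OF one cos_converges[of t]]
    by (intro sums_add sums_scaleR_left) simp_all
  then show ?thesis
    unfolding mexp_def rodrigues_def kpoly_def by (rule sums_unique[symmetric])
qed

lemma rodrigues_0: "rodrigues K 0 = mat 1"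
  by (simp add: rodrigues_def kpoly_def)

lemma rodrigues_add:
  assumes "K ** K ** K = - K"
  shows "rodrigues K a ** rodrigues K b = rodrigues K (a + b)"
  unfolding rodrigues_def kpoly_mult[OF assms]
  by (simp add: sin_add cos_add algebra_simps)

lemma rodrigues_diff_2pi:
  "rodrigues K (t - 2 * real k * pi) = rodrigues K t"
  by (simp add: rodrigues_def sin_diff cos_diff)

lemma mpow_rodrigues:
  assumes "K ** K ** K = - K"
  shows "mpow (rodrigues K t) m = rodrigues K (real m * t)"
  by (induction m) (simp_all add: assms rodrigues_0 rodrigues_add algebra_simps)

lemma transpose_rodrigues:
  assumes "transpose K = - K"
  shows "transpose (rodrigues K t) = rodrigues K (- t)"
  using assms by (simp add: rodrigues_def transpose_kpoly)

lemma trace_rodrigues: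
  assumes "trace K = 0" and "trace (K ** K) = -2"
  shows "trace (rodrigues (K::real^'n^'n) t) = real CARD('n) - 2 + 2 * cos t"
  using trace_kpoly[OF assms, of 1 "sin t" "1 - cos t"] by (simp add: rodrigues_def)

lemma SO3_iff_rotation_matrix: "A \<in> SO3 \<longleftrightarrow> rotation_matrix A"
  by (simp add: SO3_def rotation_matrix_def orthogonal_matrix)

lemma SO3_mult: "A \<in> SO3 \<Longrightarrow> B \<in> SO3 \<Longrightarrow> A ** B \<in> SO3"
  by (simp add: SO3_iff_rotation_matrix rotation_matrix_def orthogonal_matrix_mul det_mul)

lemma SO3_transpose: "A \<in> SO3 \<Longrightarrow> transpose A \<in> SO3"
  by (simp add: SO3_iff_rotation_matrix rotation_matrix_def)

lemma SO3_mat1: "mat 1 \<in> SO3"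
  by (simp add: SO3_def)

lemma SO3_mpow: "A \<in> SO3 \<Longrightarrow> mpow A m \<in> SO3"
  by (induction m) (simp_all add: SO3_mat1 SO3_mult)

lemma SO3_transpose_mult: "A \<in> SO3 \<Longrightarrow> transpose A ** A = mat 1"
  by (simp add: SO3_def)

lemma SO3_mult_transpose: "A \<in> SO3 \<Longrightarrow> A ** transpose A = mat 1"
  by (simp add: SO3_iff_rotation_matrix rotation_matrix_def orthogonal_matrix_def)

lemma rodrigues_SO3:
  assumes K3: "K ** K ** K = - K" and skew: "transpose K = - K"
  shows "rodrigues K t \<in> SO3"
proof -
  have orth: "transpose (rodrigues K s) ** rodrigues K s = mat 1" for s
    using rodrigues_add[OF K3] by (simp add: transpose_rodrigues[OF skew] rodrigues_0)
  have "det (rodrigues K t) = det (rodrigues K (t/2)) * det (rodrigues K (t/2))"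
    by (metis det_mul field_sum_of_halves rodrigues_add[OF K3])
  also have "\<dots> = det (transpose (rodrigues K (t/2)) ** rodrigues K (t/2))"
    by (simp add: det_mul)
  also have "\<dots> = 1"
    by (simp add: orth)
  finally show ?thesis
    using orth by (simp add: SO3_def)
qed

lemma norm_eq_1_components:
  "norm (v::real^3) = 1 \<Longrightarrow> v$1 * v$1 + v$2 * v$2 + v$3 * v$3 = 1"
  using power2_norm_eq_inner[of v] by (simp add: inner_vec_def sum_3)

lemma hat_cube:
  assumes "norm v = 1"
  shows "hat v ** hat v ** hat v = - hat v"
  using norm_eq_1_components[OF assms]
  unfolding vec_eq_iff forall_3
  by (simp add: hat_def matrix_matrix_mult_def sum_3 algebra_simps; algebra)

lemma transpose_hat: "transpose (hat v) = - hat v"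
  unfolding vec_eq_iff forall_3 by (simp add: hat_def transpose_def)

lemma trace_hat: "trace (hat v) = 0"
  by (simp add: hat_def trace_def sum_3)

lemma trace_hat_hat:
  assumes "norm v = 1"
  shows "trace (hat v ** hat v) = -2"
  using norm_eq_1_components[OF assms]
  by (simp add: hat_def trace_def sum_3 matrix_matrix_mult_def; algebra)

lemma mexp_hat: "norm v = 1 \<Longrightarrow> mexp (t *\<^sub>R hat v) = rodrigues (hat v) t"
  by (rule mexp_scaleR_eq_rodrigues[OF hat_cube])

lemma mexp_hat_SO3: "norm v = 1 \<Longrightarrow> mexp (t *\<^sub>R hat v) \<in> SO3"
  by (simp add: mexp_hat rodrigues_SO3 hat_cube transpose_hat)

lemma mpow_mexp_hat: "norm v = 1 \<Longrightarrow> mpow (mexp (t *\<^sub>R hat v)) m = mexp ((real m * t) *\<^sub>R hat v)"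
  by (simp add: mexp_hat mpow_rodrigues hat_cube)

lemma mexp_hat_diff_2pi: "norm v = 1 \<Longrightarrow> mexp ((t - 2 * real k * pi) *\<^sub>R hat v) = mexp (t *\<^sub>R hat v)"
  by (simp only: mexp_hat rodrigues_diff_2pi)

lemma trace_mexp_hat: "norm v = 1 \<Longrightarrow> trace (mexp (t *\<^sub>R hat v)) = 1 + 2 * cos t"
  using trace_rodrigues[of "hat v" t] by (simp add: mexp_hat trace_hat trace_hat_hat)

section \<open>The cycle graph\<close>

definition cyc_succ :: "nat \<Rightarrow> nat \<Rightarrow> nat" where
  "cyc_succ n i = (if i = n then 1 else i + 1)"

definition cyc_pred :: "nat \<Rightarrow> nat \<Rightarrow> nat" where
  "cyc_pred n i = (if i = 1 then n else i - 1)"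

lemma cyc_succ_in: "i \<in> {1..n} \<Longrightarrow> cyc_succ n i \<in> {1..n}"
  by (auto simp: cyc_succ_def)

lemma cyc_pred_in: "i \<in> {1..n} \<Longrightarrow> cyc_pred n i \<in> {1..n}"
  by (auto simp: cyc_pred_def)

lemma cyc_succ_pred: "i \<in> {1..n} \<Longrightarrow> cyc_succ n (cyc_pred n i) = i"
  by (auto simp: cyc_pred_def cyc_succ_def)

lemma Rblock_transpose:
  "3 \<le> n \<Longrightarrow> i \<in> {1..n} \<Longrightarrow> j \<in> {1..n} \<Longrightarrow> transpose (Rblock n M i j) = Rblock n M j i"
  by (auto simp: Rblock_def transpose_zero)

lemma cyc_neighbours_distinct:
  "3 \<le> n \<Longrightarrow> i \<in> {1..n} \<Longrightarrow>
    cyc_succ n i \<noteq> i \<and> cyc_pred n i \<noteq> i \<and> cyc_succ n i \<noteq> cyc_pred n i"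
  by (auto simp: cyc_succ_def cyc_pred_def)

lemma Rblock_diag: "Rblock n M i i = mat 1"
  by (simp add: Rblock_def)

lemma Rblock_succ: "3 \<le> n \<Longrightarrow> i \<in> {1..n} \<Longrightarrow> Rblock n M i (cyc_succ n i) = M i"
  by (auto simp: Rblock_def cyc_succ_def)

lemma Rblock_pred:
  "3 \<le> n \<Longrightarrow> i \<in> {1..n} \<Longrightarrow> Rblock n M i (cyc_pred n i) = transpose (M (cyc_pred n i))"
  by (auto simp: Rblock_def cyc_pred_def)

lemma Rblock_nonadjacent:
  "i \<in> {1..n} \<Longrightarrow> j \<in> {1..n} \<Longrightarrow> j \<noteq> i \<Longrightarrow> j \<noteq> cyc_succ n i \<Longrightarrow> j \<noteq> cyc_pred n i \<Longrightarrow>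
    Rblock n M i j = 0"
  by (auto simp: Rblock_def cyc_succ_def cyc_pred_def)

lemma trace_Rblock:
  assumes "3 \<le> n" and "i \<in> {1..n}" and "j \<in> {1..n}"
  shows "trace (A ** Rblock n M i j ** B) =
    (if j = i then trace (A ** B) else 0) + (if j = cyc_succ n i then trace (A ** M i ** B) else 0)
    + (if j = cyc_pred n i then trace (A ** transpose (M j) ** B) else 0)"
  using cyc_neighbours_distinct[OF assms(1,2)] Rblock_succ[OF assms(1,2)] Rblock_pred[OF assms(1,2)]
    Rblock_nonadjacent[OF assms(2,3)]
  by (cases "j = i"; cases "j = cyc_succ n i"; cases "j = cyc_pred n i")
    (simp_all add: Rblock_diag trace_zero)

definition cycle_form :: "nat \<Rightarrow> (nat \<Rightarrow> mat3) \<Rightarrow> (nat \<Rightarrow> mat3) \<Rightarrow> (nat \<Rightarrow> mat3) \<Rightarrow> real" where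
  "cycle_form n M X Y = (\<Sum>i\<in>{1..n}. \<Sum>j\<in>{1..n}. trace (transpose (X i) ** Rblock n M i j ** Y j))"

lemma fcost_eq_cycle_form: "fcost n M R = - cycle_form n M R R"
  by (simp add: fcost_def cycle_form_def)

lemma cycle_form_sym:
  assumes "3 \<le> n"
  shows "cycle_form n M X Y = cycle_form n M Y X"
proof -
  have "trace (transpose (X i) ** Rblock n M i j ** Y j) = trace (transpose (Y j) ** Rblock n M j i ** X i)"
    if "i \<in> {1..n}" and "j \<in> {1..n}" for i j
    using trace_transpose[of "transpose (X i) ** Rblock n M i j ** Y j"]
      Rblock_transpose[OF assms that]
    by (simp add: matrix_transpose_mul matrix_mul_assoc)
  then have "cycle_form n M X Y = (\<Sum>i\<in>{1..n}. \<Sum>j\<in>{1..n}. trace (transpose (Y j) ** Rblock n M j i ** X i))"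
    unfolding cycle_form_def by (intro sum.cong) auto
  also have "\<dots> = cycle_form n M Y X"
    unfolding cycle_form_def by (rule sum.swap)
  finally show ?thesis .
qed

lemma cycle_form_row:
  assumes n3: "3 \<le> n" and i: "i \<in> {1..n}"
  shows "(\<Sum>j\<in>{1..n}. trace (transpose (X i) ** Rblock n M i j ** Y j)) =
    trace (transpose (X i) ** Y i) + trace (transpose (X i) ** M i ** Y (cyc_succ n i))
    + trace (transpose (X i) ** transpose (M (cyc_pred n i)) ** Y (cyc_pred n i))"
proof -
  have "(\<Sum>j\<in>{1..n}. trace (transpose (X i) ** Rblock n M i j ** Y j)) =
    (\<Sum>j\<in>{1..n}. (if j = i then trace (transpose (X i) ** Y j) else 0)
      + (if j = cyc_succ n i then trace (transpose (X i) ** M i ** Y j) else 0)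
      + (if j = cyc_pred n i then trace (transpose (X i) ** transpose (M j) ** Y j) else 0))"
    by (rule sum.cong[OF refl], rule trace_Rblock[OF n3 i])
  also have "\<dots> = trace (transpose (X i) ** Y i) + trace (transpose (X i) ** M i ** Y (cyc_succ n i))
    + trace (transpose (X i) ** transpose (M (cyc_pred n i)) ** Y (cyc_pred n i))"
    using i cyc_succ_in[OF i] cyc_pred_in[OF i] by (simp add: sum.distrib)
  finally show ?thesis .
qed

lemma cycle_form_quadratic:
  "cycle_form n M (\<lambda>i. X i + t *\<^sub>R S i) (\<lambda>i. X i + t *\<^sub>R S i) =
   cycle_form n M X X + t * (cycle_form n M S X + cycle_form n M X S) + t\<^sup>2 * cycle_form n M S S"
proof -
  have "trace (transpose (X i + t *\<^sub>R S i) ** B ** (X j + t *\<^sub>R S j)) =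
     trace (transpose (X i) ** B ** X j)
     + t * (trace (transpose (S i) ** B ** X j) + trace (transpose (X i) ** B ** S j))
     + t\<^sup>2 * trace (transpose (S i) ** B ** S j)" for i j B
    by (simp only: transpose_add transpose_scalar matrix_add_rdistrib matrix_add_ldistrib
        matrix_mul_scaleR_left matrix_mul_scaleR_right trace_add trace_scaleR)
      (simp add: algebra_simps power2_eq_square)
  then show ?thesis
    unfolding cycle_form_def by (simp only: sum.distrib sum_distrib_left distrib_left)
qed

section \<open>Stationary points with equal relative rotations\<close>

locale equal_edge_rotations =
  fixes n :: nat and M R :: "nat \<Rightarrow> mat3" and E :: mat3
  assumes n3: "3 \<le> n"
    and R_SO3: "\<forall>i\<in>{1..n}. R i \<in> SO3"
    and edge: "\<forall>i\<in>{1..n}. transpose (R i) ** M i ** R (cyc_succ n i) = E"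
begin

lemma edge_backward:
  assumes i: "i \<in> {1..n}"
  shows "transpose (R i) ** transpose (M (cyc_pred n i)) ** R (cyc_pred n i) = transpose E"
proof -
  have "E = transpose (R (cyc_pred n i)) ** M (cyc_pred n i) ** R i"
    using edge cyc_pred_in[OF i] cyc_succ_pred[OF i] by metis
  then show ?thesis
    by (simp add: matrix_transpose_mul matrix_mul_assoc)
qed

lemma block_row_sum:
  assumes i: "i \<in> {1..n}"
  shows "(\<Sum>j\<in>{1..n}. trace (transpose (R i ** W) ** Rblock n M i j ** R j)) =
    trace (transpose W ** (mat 1 + E + transpose E))"
proof -
  have "(\<Sum>j\<in>{1..n}. trace (transpose (R i ** W) ** Rblock n M i j ** R j)) =
      trace (transpose W ** (transpose (R i) ** R i))
      + trace (transpose W ** (transpose (R i) ** M i ** R (cyc_succ n i)))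
      + trace (transpose W ** (transpose (R i) ** transpose (M (cyc_pred n i)) ** R (cyc_pred n i)))"
    using cycle_form_row[OF n3 i, of "\<lambda>j. R j ** W"]
    by (simp add: matrix_transpose_mul matrix_mul_assoc)
  also have "\<dots> = trace (transpose W ** mat 1) + trace (transpose W ** E) + trace (transpose W ** transpose E)"
    using i edge edge_backward[OF i] R_SO3 SO3_transpose_mult by simp
  also have "\<dots> = trace (transpose W ** (mat 1 + E + transpose E))"
    by (simp add: matrix_add_ldistrib trace_add)
  finally show ?thesis .
qed

lemma cycle_form_value: "cycle_form n M R R = real n * (3 + 2 * trace E)"
proof -
  have "cycle_form n M R R = (\<Sum>i\<in>{1..n}. trace (transpose (mat 1) ** (mat 1 + E + transpose E)))"
    unfolding cycle_form_def using block_row_sum[where W = "mat 1"] by (intro sum.cong) simp_all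
  then show ?thesis
    by (simp add: trace_add trace_I trace_transpose)
qed

lemma fcost_value: "fcost n M R = - 3 * real n - 2 * real n * trace E"
  by (simp add: fcost_eq_cycle_form cycle_form_value algebra_simps)

lemma cycle_form_skew_direction:
  assumes skew: "\<forall>i\<in>{1..n}. skew (\<Omega> i)"
  shows "cycle_form n M (\<lambda>i. R i ** \<Omega> i) R = 0"
  unfolding cycle_form_def
proof (rule sum.neutral, intro ballI)
  fix i assume i: "i \<in> {1..n}"
  have "transpose (\<Omega> i) = - \<Omega> i"
    using skew i by (simp add: skew_def)
  moreover have "transpose (mat 1 + E + transpose E) = mat 1 + E + transpose E"
    by (simp add: transpose_add)
  ultimately have "trace (transpose (\<Omega> i) ** (mat 1 + E + transpose E)) = 0"
    by (rule trace_skew_mult_symmetric)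
  then show "(\<Sum>j\<in>{1..n}. trace (transpose (R i ** \<Omega> i) ** Rblock n M i j ** R j)) = 0"
    unfolding block_row_sum[OF i] .
qed

lemma fcost_tangent_derivative:
  assumes "\<forall>i\<in>{1..n}. skew (\<Omega> i)"
  shows "((\<lambda>t. fcost n M (\<lambda>i. R i + t *\<^sub>R (R i ** \<Omega> i))) has_real_derivative 0) (at 0)"
proof -
  define S where "S i = R i ** \<Omega> i" for i
  have SR: "cycle_form n M S R = 0"
    unfolding S_def using cycle_form_skew_direction[OF assms] .
  then have RS: "cycle_form n M R S = 0"
    using cycle_form_sym[OF n3] by metis
  have "(\<lambda>t. fcost n M (\<lambda>i. R i + t *\<^sub>R (R i ** \<Omega> i))) =
        (\<lambda>t. - (cycle_form n M R R + t\<^sup>2 * cycle_form n M S S))"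
    unfolding fcost_eq_cycle_form S_def[symmetric] cycle_form_quadratic SR RS by simp
  moreover have "((\<lambda>t. - (cycle_form n M R R + t\<^sup>2 * cycle_form n M S S)) has_real_derivative 0) (at 0)"
    by (auto intro!: derivative_eq_intros)
  ultimately show ?thesis
    by simp
qed

lemma stationary: "stationary n M R"
  unfolding stationary_def using R_SO3 fcost_tangent_derivative by blast

end

section \<open>The candidate points\<close>

lemma lprod_Suc: "1 \<le> i \<Longrightarrow> lprod M (Suc i) = lprod M i ** M i"
  by (simp add: lprod_def)

lemma lprod_SO3:
  assumes "\<forall>s\<in>{1..n}. M s \<in> SO3"
  shows "i \<le> n + 1 \<Longrightarrow> lprod M i \<in> SO3"
proof (induction i)
  case 0
  then show ?case
    by (simp add: lprod_def SO3_mat1)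
next
  case (Suc i)
  then show ?case
    using assms by (cases "i = 0") (auto simp: lprod_def SO3_mat1 lprod_Suc SO3_mult)
qed

text \<open>Both factors are empty products at \<open>i = 1\<close>, so the separate case \<open>R\<^sub>1 = I\<close> of the
  theorem needs no special treatment.\<close>

definition cycle_point :: "(nat \<Rightarrow> mat3) \<Rightarrow> mat3 \<Rightarrow> nat \<Rightarrow> mat3" where
  "cycle_point M E i = transpose (lprod M i) ** mpow E (i - 1)"

lemma cycle_point_1: "cycle_point M E 1 = mat 1"
  by (simp add: cycle_point_def lprod_def)

lemma cycle_point_SO3:
  assumes "\<forall>s\<in>{1..n}. M s \<in> SO3" and "E \<in> SO3" and "i \<in> {1..n}"
  shows "cycle_point M E i \<in> SO3"
  using assms lprod_SO3[OF assms(1)]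
  by (simp add: cycle_point_def SO3_mult SO3_transpose SO3_mpow)

text \<open>The last edge closes up because \<open>E\<^sup>n\<close> is the cycle error.\<close>

lemma cycle_point_edge:
  assumes M: "\<forall>s\<in>{1..n}. M s \<in> SO3" and E: "E \<in> SO3"
    and root: "mpow E n = cycle_error n M" and i: "i \<in> {1..n}"
  shows "transpose (cycle_point M E i) ** M i ** cycle_point M E (cyc_succ n i) = E"
proof -
  have i1: "1 \<le> i" and "i \<le> n"
    using i by auto
  have "mpow E i = mpow E (i - 1) ** E"
    using i1 by (cases i) simp_all
  then have last_step: "transpose (mpow E (i - 1)) ** mpow E i = E"
    by (simp add: matrix_mul_assoc SO3_transpose_mult SO3_mpow E)
  have "transpose (cycle_point M E i) ** M i = transpose (mpow E (i - 1)) ** lprod M (Suc i)"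
    using i1 by (simp add: cycle_point_def lprod_Suc matrix_transpose_mul matrix_mul_assoc)
  moreover have "lprod M (Suc i) ** cycle_point M E (cyc_succ n i) = mpow E i"
  proof (cases "i = n")
    case True
    then show ?thesis
      using root cycle_point_1[of M E] by (simp add: cyc_succ_def cycle_error_def)
  next
    case False
    then have "lprod M (Suc i) ** transpose (lprod M (Suc i)) = mat 1"
      using \<open>i \<le> n\<close> by (intro SO3_mult_transpose lprod_SO3[OF M]) simp
    then show ?thesis
      using False by (simp add: cyc_succ_def cycle_point_def matrix_mul_assoc)
  qed
  ultimately show ?thesis
    using last_step by (metis matrix_mul_assoc)
qed

theorem mainTheorem5:
  fixes n :: nat and M :: "nat \<Rightarrow> real^3^3" and nhat :: "real^3" and \<gamma> :: real and k :: nat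
  assumes "n \<ge> 3"
    and "\<forall>s\<in>{1..n}. M s \<in> SO3"
    and "norm nhat = 1"
    and "- pi \<le> \<gamma>" and "\<gamma> \<le> pi"
    and "cycle_error n M = mexp (\<gamma> *\<^sub>R hat nhat)"
    and "k < n"
  shows "let Ek = mexp ((\<gamma> / real n - 2 * real k * pi / real n) *\<^sub>R hat nhat);
             R = (\<lambda>i. if i = 1 then mat 1 else transpose (lprod M i) ** mpow Ek (i - 1))
         in stationary n M R
            \<and> fcost n M R = - 3 * real n - 2 * real n * trace Ek
            \<and> - 3 * real n - 2 * real n * trace Ek
                = - 3 * real n - 2 * real n * (1 + 2 * cos (\<gamma> / real n - 2 * real k * pi / real n))"
proof -
  define \<theta> where "\<theta> = \<gamma> / real n - 2 * real k * pi / real n"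
  define Ek where "Ek = mexp (\<theta> *\<^sub>R hat nhat)"
  have "real n * \<theta> = \<gamma> - 2 * real k * pi"
    using assms(1) unfolding \<theta>_def by (simp add: field_simps)
  then have root: "mpow Ek n = cycle_error n M"
    using assms(3,6) by (simp add: Ek_def mpow_mexp_hat mexp_hat_diff_2pi)
  have SO3: "Ek \<in> SO3"
    unfolding Ek_def using assms(3) by (rule mexp_hat_SO3)
  interpret equal_edge_rotations n M "cycle_point M Ek" Ek
    using assms(1,2) cycle_point_SO3[OF assms(2) SO3] cycle_point_edge[OF assms(2) SO3 root]
      cyc_succ_in by unfold_locales auto
  have R: "(\<lambda>i. if i = 1 then mat 1 else transpose (lprod M i) ** mpow Ek (i - 1)) = cycle_point M Ek"
    by (simp add: fun_eq_iff cycle_point_def lprod_def)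
  show ?thesis
    unfolding Let_def \<theta>_def[symmetric] Ek_def[symmetric] R
    using stationary fcost_value trace_mexp_hat[OF assms(3)] by (simp add: Ek_def)
qed

end
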